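(* Assume $\hat\omega\in\mathbb{P}_\Omega$ and that $\hat\omega$ and $\mathbf K$ are such that, for every $\omega^{(n)}\in\mathbb{P}_\Omega$ (with $\Delta_n\ne0$), the step $\hat\alpha_n$ defined in the context satisfies $\hat\alpha_n\le\omega^{(n)}_{i_n^-}$. Then the vertex-exchange iteration $\omega^{(n+1)}=\omega^{(n)}+\hat\alpha_n\Delta_n$, initialized at any $\omega^{(1)}\in\mathbb{P}_\Omega$, satisfies $$\|\omega^{(n)}-\hat\omega\|_{\mathbf K}^2\le\frac{8\lambda_{\max}(\mathbf K)}{n+3},\qquad n\ge1.$$
   Context: $\mathbf K$ is a real symmetric positive definite $\Omega\times\Omega$ matrix with largest eigenvalue $\lambda_{\max}(\mathbf K)$; $\|u\|_{\mathbf K}^2=u^T\mathbf K u$. $e_i$ is the $i$-th canonical basis vector of $\mathbb{R}^\Omega$ and $\mathbb{P}_\Omega=\{\omega\in\mathbb{R}^\Omega:\omega_i\ge0,\sum_i\omega_i=1\}$. Vertex-exchange step: $i_n^+\in\arg\min_{i=1,\dots,\Omega}e_i^T\mathbf K(\omega^{(n)}-\hat\omega)$, $i_n^-\in\arg\max_{i:\,\omega^{(n)}_i>0}e_i^T\mathbf K(\omega^{(n)}-\hat\omega)$, $\Delta_n=e_{i_n^+}-e_{i_n^-}$, and $\hat\alpha_n=\Delta_n^T\mathbf K(\hat\omega-\omega^{(n)})/\|\Delta_n\|_{\mathbf K}^2$ (if $\Delta_n=0$ the iterate is left unchanged). *)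

theory Defs
  imports "HOL-Analysis.Analysis"
begin

text \<open>Index set {1..Omega} is rendered as a finite type 'n; vectors are real^'n,
 the matrix K is real^'n^'n.\<close>

definition Knorm2 :: "real^'n^'n \<Rightarrow> real^'n \<Rightarrow> real" where
  "Knorm2 K u = u \<bullet> (K *v u)"

definition sym_pos_def_mat :: "real^'n^'n \<Rightarrow> bool" where
  "sym_pos_def_mat K \<longleftrightarrow> transpose K = K \<and> (\<forall>u. u \<noteq> 0 \<longrightarrow> u \<bullet> (K *v u) > 0)"

definition eigenvalues_mat :: "real^'n^'n \<Rightarrow> real set" where
  "eigenvalues_mat K = {l. \<exists>v. v \<noteq> 0 \<and> K *v v = l *\<^sub>R v}"

definition lambda_max :: "real^'n^'n \<Rightarrow> real" where
  "lambda_max K = Max (eigenvalues_mat K)"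

definition ecanon :: "'n::finite \<Rightarrow> real^'n" where
  "ecanon i = axis i 1"

definition prob_simplex :: "(real^'n::finite) set" where
  "prob_simplex = {w. (\<forall>i. 0 \<le> w $ i) \<and> (\<Sum>i\<in>UNIV. w $ i) = 1}"

definition vx_choice :: "real^'n^'n \<Rightarrow> real^'n \<Rightarrow> real^'n \<Rightarrow> 'n::finite \<Rightarrow> 'n \<Rightarrow> bool" where
  "vx_choice K wh w ip im \<longleftrightarrow>
     (\<forall>i. ecanon ip \<bullet> (K *v (w - wh)) \<le> ecanon i \<bullet> (K *v (w - wh))) \<and>
     0 < w $ im \<and>
     (\<forall>i. 0 < w $ i \<longrightarrow> ecanon i \<bullet> (K *v (w - wh)) \<le> ecanon im \<bullet> (K *v (w - wh)))"

definition vx_Delta :: "'n::finite \<Rightarrow> 'n \<Rightarrow> real^'n" where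
  "vx_Delta ip im = ecanon ip - ecanon im"

definition vx_alpha :: "real^'n^'n \<Rightarrow> real^'n \<Rightarrow> real^'n \<Rightarrow> 'n::finite \<Rightarrow> 'n \<Rightarrow> real" where
  "vx_alpha K wh w ip im =
     (vx_Delta ip im \<bullet> (K *v (wh - w))) / Knorm2 K (vx_Delta ip im)"

definition vx_step :: "real^'n^'n \<Rightarrow> real^'n \<Rightarrow> real^'n \<Rightarrow> real^'n::finite \<Rightarrow> bool" where
  "vx_step K wh w w' \<longleftrightarrow> (\<exists>ip im. vx_choice K wh w ip im \<and>
     w' = (if vx_Delta ip im = 0 then w
           else w + vx_alpha K wh w ip im *\<^sub>R vx_Delta ip im))"

end

theory Submission
  imports Defs
begin

text \<open>Write \<open>F = \<parallel>v - wh\<parallel>\<^sub>K\<^sup>2\<close> and \<open>g = K(v - wh)\<close>. Since \<open>i\<^sup>-\<close> maximises \<open>g\<close> on the support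
  of \<open>v\<close> and \<open>i\<^sup>+\<close> minimises it everywhere, \<open>F = v\<cdot>g - wh\<cdot>g \<le> g\<^sub>i\<^sub>- - g\<^sub>i\<^sub>+ = -\<Delta>\<cdot>g\<close>.
  The exact line search along \<open>\<Delta>\<close> decreases \<open>F\<close> by \<open>(\<Delta>\<cdot>g)\<^sup>2 / \<parallel>\<Delta>\<parallel>\<^sub>K\<^sup>2 \<ge> F\<^sup>2 / (2\<lambda>\<^sub>m\<^sub>a\<^sub>x)\<close>, and the
  hypothesis \<open>\<alpha> \<le> v\<^sub>i\<^sub>-\<close> keeps the iterate in the simplex. A sequence with
  \<open>F\<^sub>n\<^sub>+\<^sub>1 \<le> F\<^sub>n - F\<^sub>n\<^sup>2/(2\<lambda>)\<close> and \<open>F\<^sub>1 \<le> 2\<lambda>\<close> decays like \<open>8\<lambda>/(n+3)\<close>.\<close>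

section \<open>Symmetric matrices and the largest eigenvalue\<close>

lemma inner_matrix_vector_symmetric:
  fixes K :: "real^'n::finite^'n"
  assumes "transpose K = K"
  shows "x \<bullet> (K *v y) = y \<bullet> (K *v x)"
proof -
  have "x \<bullet> (K *v y) = (x v* K) \<bullet> y" by (simp add: dot_lmul_matrix)
  also have "x v* K = K *v x" using vector_transpose_matrix[of x K] assms by simp
  finally show ?thesis by (simp add: inner_commute)
qed

lemma quadratic_form_add_scaleR:
  fixes K :: "real^'n::finite^'n"
  assumes "transpose K = K"
  shows "(x + t *\<^sub>R y) \<bullet> (K *v (x + t *\<^sub>R y)) =
           x \<bullet> (K *v x) + 2 * t * (y \<bullet> (K *v x)) + t^2 * (y \<bullet> (K *v y))"
proof -
  have "(x + t *\<^sub>R y) \<bullet> (K *v (x + t *\<^sub>R y)) =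
          x \<bullet> (K *v x) + t * (x \<bullet> (K *v y)) + t * (y \<bullet> (K *v x)) + t * t * (y \<bullet> (K *v y))"
    by (simp add: matrix_vector_right_distrib matrix_vector_mult_scaleR inner_add_left
        inner_add_right algebra_simps)
  then show ?thesis
    using inner_matrix_vector_symmetric[OF assms, of x y] by (simp add: power2_eq_square)
qed

lemma linear_term_zero_if_quadratic_nonpos:
  fixes b c :: real
  assumes "\<And>t. 2 * t * b + t^2 * c \<le> 0"
  shows "b = 0"
proof (rule ccontr)
  assume b: "b \<noteq> 0"
  define a where "a = \<bar>c\<bar> + 1"
  have a: "a > 0" "- a \<le> c" unfolding a_def by auto
  define t where "t = b / a"
  have "t^2 * (- a) \<le> t^2 * c" using a by (intro mult_left_mono) auto
  moreover have "2 * t * b - t^2 * a = b^2 / a"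
    unfolding t_def using a by (simp add: field_simps power2_eq_square)
  moreover have "b^2 / a > 0" using b a by simp
  ultimately show False using assms[of t] by linarith
qed

text \<open>The maximiser of the quadratic form on the unit sphere is an eigenvector: perturbing it
  by \<open>t w\<close> cannot increase the Rayleigh quotient, so the first-order term in \<open>t\<close> vanishes.\<close>
lemma eigenvalue_bounds_quadratic_form:
  fixes K :: "real^'n::finite^'n"
  assumes "transpose K = K"
  shows "\<exists>M\<in>eigenvalues_mat K. \<forall>u. u \<bullet> (K *v u) \<le> M * (u \<bullet> u)"
proof -
  let ?q = "\<lambda>u::real^'n. u \<bullet> (K *v u)"
  have cont: "continuous_on (sphere 0 1) ?q"
    by (intro continuous_intros linear_continuous_on) (auto intro: linear_linear)
  have ne: "sphere (0::real^'n) 1 \<noteq> {}"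
    by (metis norm_axis_1 mem_sphere_0 empty_iff)
  obtain v where v: "v \<in> sphere 0 1" and vmax: "\<And>u. u \<in> sphere 0 1 \<Longrightarrow> ?q u \<le> ?q v"
    using continuous_attains_sup[OF compact_sphere ne cont] by blast
  define M where "M = ?q v"
  have vv: "v \<bullet> v = 1" using v by (simp add: dot_square_norm)
  have bound: "?q u \<le> M * (u \<bullet> u)" for u
  proof (cases "u = 0")
    case False
    define u' where "u' = (1 / norm u) *\<^sub>R u"
    have "u' \<in> sphere 0 1" using False by (simp add: u'_def)
    then have "?q u' \<le> M" using vmax M_def by simp
    moreover have "?q u' = ?q u / (norm u)^2"
      by (simp add: u'_def matrix_vector_mult_scaleR power2_eq_square)
    moreover have "u \<bullet> u = (norm u)^2" by (simp add: dot_square_norm)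
    moreover have "norm u > 0" using False by simp
    ultimately show ?thesis by (simp add: divide_le_eq mult.commute)
  qed simp
  have orth: "w \<bullet> (K *v v - M *\<^sub>R v) = 0" for w
  proof (rule linear_term_zero_if_quadratic_nonpos)
    fix t
    have "?q (v + t *\<^sub>R w) = M + 2 * t * (w \<bullet> (K *v v)) + t^2 * ?q w"
      using quadratic_form_add_scaleR[OF assms] M_def by simp
    moreover have "(v + t *\<^sub>R w) \<bullet> (v + t *\<^sub>R w) = 1 + 2 * t * (w \<bullet> v) + t^2 * (w \<bullet> w)"
      using vv by (simp add: inner_add_left inner_add_right inner_commute power2_eq_square
          algebra_simps)
    ultimately have "M + 2 * t * (w \<bullet> (K *v v)) + t^2 * ?q w \<le>
                       M * (1 + 2 * t * (w \<bullet> v) + t^2 * (w \<bullet> w))"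
      using bound[of "v + t *\<^sub>R w"] by simp
    then show "2 * t * (w \<bullet> (K *v v - M *\<^sub>R v)) + t^2 * (?q w - M * (w \<bullet> w)) \<le> 0"
      by (simp add: inner_diff_right algebra_simps)
  qed
  have "K *v v = M *\<^sub>R v"
    using orth[of "K *v v - M *\<^sub>R v"] by simp
  moreover have "v \<noteq> 0" using v by auto
  ultimately have "M \<in> eigenvalues_mat K" unfolding eigenvalues_mat_def by blast
  then show ?thesis using bound by blast
qed

text \<open>Eigenvectors for distinct eigenvalues of a symmetric matrix are orthogonal, hence
  independent, so there are at most finitely many eigenvalues.\<close>
lemma finite_eigenvalues_mat:
  fixes K :: "real^'n::finite^'n"
  assumes "transpose K = K"
  shows "finite (eigenvalues_mat K)"
proof -
  define E where "E = eigenvalues_mat K"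
  define f where "f l = (SOME v. v \<noteq> 0 \<and> K *v v = l *\<^sub>R v)" for l
  have f: "f l \<noteq> 0 \<and> K *v f l = l *\<^sub>R f l" if "l \<in> E" for l
  proof -
    have "\<exists>v. v \<noteq> 0 \<and> K *v v = l *\<^sub>R v" using that by (simp add: E_def eigenvalues_mat_def)
    then show ?thesis unfolding f_def by (rule someI_ex)
  qed
  have inj: "inj_on f E"
  proof (rule inj_onI)
    fix a b assume a: "a \<in> E" and b: "b \<in> E" and e: "f a = f b"
    have "a *\<^sub>R f a = b *\<^sub>R f a" using f[OF a] f[OF b] e by metis
    then have "(a - b) *\<^sub>R f a = 0" by (simp add: scaleR_diff_left)
    then show "a = b" using f[OF a] by simp
  qed
  have "pairwise orthogonal (f ` E)"
    unfolding pairwise_def orthogonal_def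
  proof (intro ballI impI)
    fix x y assume "x \<in> f ` E" "y \<in> f ` E" "x \<noteq> y"
    then obtain a b where a: "a \<in> E" "x = f a" and b: "b \<in> E" "y = f b" and "a \<noteq> b"
      by blast
    have "b * (x \<bullet> y) = a * (x \<bullet> y)"
      using inner_matrix_vector_symmetric[OF assms, of x y] f[OF a(1)] f[OF b(1)] a(2) b(2)
      by (simp add: inner_commute)
    then show "x \<bullet> y = 0" using \<open>a \<noteq> b\<close> by simp
  qed
  moreover have "0 \<notin> f ` E" using f by auto
  ultimately have "finite (f ` E)"
    by (intro independent_imp_finite pairwise_orthogonal_independent)
  then show ?thesis using inj finite_imageD unfolding E_def by blast
qed

lemma Knorm2_le_lambda_max:
  fixes K :: "real^'n::finite^'n"
  assumes "transpose K = K"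
  shows "Knorm2 K u \<le> lambda_max K * (u \<bullet> u)"
proof -
  obtain M where M: "M \<in> eigenvalues_mat K" "\<And>u. u \<bullet> (K *v u) \<le> M * (u \<bullet> u)"
    using eigenvalue_bounds_quadratic_form[OF assms] by blast
  have "M \<le> lambda_max K"
    unfolding lambda_max_def using finite_eigenvalues_mat[OF assms] M(1) by simp
  then have "M * (u \<bullet> u) \<le> lambda_max K * (u \<bullet> u)" by (simp add: mult_right_mono)
  then show ?thesis using M(2)[of u] unfolding Knorm2_def by linarith
qed

lemma Knorm2_nonneg:
  assumes "sym_pos_def_mat K"
  shows "Knorm2 K u \<ge> 0"
  using assms unfolding Knorm2_def sym_pos_def_mat_def
  by (cases "u = 0") (auto intro: less_imp_le)

lemma Knorm2_pos:
  assumes "sym_pos_def_mat K" "u \<noteq> 0"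
  shows "Knorm2 K u > 0"
  using assms unfolding Knorm2_def sym_pos_def_mat_def by simp

lemma lambda_max_pos:
  fixes K :: "real^'n::finite^'n"
  assumes "sym_pos_def_mat K"
  shows "lambda_max K > 0"
proof -
  obtain i :: 'n where True by simp
  have "ecanon i \<noteq> 0" by (simp add: ecanon_def)
  then have "0 < Knorm2 K (ecanon i)" by (rule Knorm2_pos[OF assms])
  also have "\<dots> \<le> lambda_max K * (ecanon i \<bullet> ecanon i)"
    using assms unfolding sym_pos_def_mat_def by (intro Knorm2_le_lambda_max) simp
  finally show ?thesis by (simp add: ecanon_def)
qed

section \<open>The probability simplex\<close>

lemma ecanon_inner: "ecanon i \<bullet> x = x $ i"
  by (simp add: ecanon_def inner_axis')

lemma ecanon_nth: "ecanon i $ j = (if j = i then 1 else 0)"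
  by (simp add: ecanon_def axis_def)

lemma inner_vec_sum: "(x::real^'n::finite) \<bullet> y = (\<Sum>i\<in>UNIV. x $ i * y $ i)"
  by (simp add: inner_vec_def)

lemma prob_simplex_inner_le:
  assumes "x \<in> prob_simplex" and "\<And>i. 0 < x $ i \<Longrightarrow> g $ i \<le> c"
  shows "x \<bullet> g \<le> c"
proof -
  have nn: "\<And>i. 0 \<le> x $ i" and s: "(\<Sum>i\<in>UNIV. x $ i) = 1"
    using assms(1) by (auto simp: prob_simplex_def)
  have "x \<bullet> g \<le> (\<Sum>i\<in>UNIV. x $ i * c)"
    unfolding inner_vec_sum
  proof (rule sum_mono)
    fix i show "x $ i * g $ i \<le> x $ i * c"
      using nn[of i] assms(2)[of i] by (cases "x $ i > 0") (auto intro: mult_left_mono)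
  qed
  also have "\<dots> = c" using s by (simp add: sum_distrib_right[symmetric])
  finally show ?thesis .
qed

lemma prob_simplex_inner_ge:
  assumes "x \<in> prob_simplex" and "\<And>i. c \<le> g $ i"
  shows "c \<le> x \<bullet> g"
proof -
  have nn: "\<And>i. 0 \<le> x $ i" and s: "(\<Sum>i\<in>UNIV. x $ i) = 1"
    using assms(1) by (auto simp: prob_simplex_def)
  have "c = (\<Sum>i\<in>UNIV. x $ i * c)" using s by (simp add: sum_distrib_right[symmetric])
  also have "\<dots> \<le> x \<bullet> g"
    unfolding inner_vec_sum by (rule sum_mono) (simp add: assms(2) nn mult_left_mono)
  finally show ?thesis .
qed

lemma prob_simplex_inner_self_le_1:
  assumes "x \<in> prob_simplex"
  shows "x \<bullet> x \<le> 1"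
proof -
  have "x $ i \<le> 1" for i
    using assms member_le_sum[of i UNIV "\<lambda>i. x $ i"] by (auto simp: prob_simplex_def)
  then show ?thesis by (intro prob_simplex_inner_le[OF assms])
qed

lemma prob_simplex_dist_le_2:
  assumes "a \<in> prob_simplex" "b \<in> prob_simplex"
  shows "(a - b) \<bullet> (a - b) \<le> 2"
proof -
  have "0 \<le> a \<bullet> b"
    using assms by (intro prob_simplex_inner_ge) (auto simp: prob_simplex_def)
  moreover have "(a - b) \<bullet> (a - b) = a \<bullet> a + b \<bullet> b - 2 * (a \<bullet> b)"
    by (simp add: inner_diff_left inner_diff_right inner_commute)
  ultimately show ?thesis
    using prob_simplex_inner_self_le_1[OF assms(1)] prob_simplex_inner_self_le_1[OF assms(2)]
    by linarith
qed

lemma vx_Delta_nth: "vx_Delta ip im $ i = (if i = ip then 1 else 0) - (if i = im then 1 else 0)"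
  by (simp add: vx_Delta_def ecanon_nth)

lemma vx_Delta_inner_self_le_2: "vx_Delta ip im \<bullet> vx_Delta ip im \<le> 2"
  by (simp add: vx_Delta_def inner_diff_left ecanon_inner ecanon_nth)

lemma prob_simplex_exchange:
  assumes v: "v \<in> prob_simplex" and "0 \<le> \<alpha>" "\<alpha> \<le> v $ im"
  shows "v + \<alpha> *\<^sub>R vx_Delta ip im \<in> prob_simplex"
proof -
  let ?v' = "v + \<alpha> *\<^sub>R vx_Delta ip im"
  have vnn: "\<And>i. 0 \<le> v $ i" and vs: "(\<Sum>i\<in>UNIV. v $ i) = 1"
    using v by (auto simp: prob_simplex_def)
  have "0 \<le> ?v' $ i" for i
    using assms(2,3) vnn[of i] by (cases "i = im") (auto simp: vx_Delta_nth)
  moreover have "(\<Sum>i\<in>UNIV. ?v' $ i) = 1"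
    using vs by (simp add: vx_Delta_nth sum.distrib right_diff_distrib sum_subtractf
        if_distrib[of "\<lambda>x. \<alpha> * x"] cong: if_cong)
  ultimately show ?thesis unfolding prob_simplex_def by simp
qed

section \<open>One vertex-exchange step\<close>

lemma vx_choice_gap:
  assumes "wh \<in> prob_simplex" "v \<in> prob_simplex" "vx_choice K wh v ip im"
  shows "Knorm2 K (v - wh) \<le> - (vx_Delta ip im \<bullet> (K *v (v - wh)))"
proof -
  define g where "g = K *v (v - wh)"
  have "v \<bullet> g \<le> g $ im"
    using assms(3) by (intro prob_simplex_inner_le[OF assms(2)])
      (auto simp: vx_choice_def g_def ecanon_inner)
  moreover have "g $ ip \<le> wh \<bullet> g"
    using assms(3) by (intro prob_simplex_inner_ge[OF assms(1)])
      (auto simp: vx_choice_def g_def ecanon_inner)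
  ultimately show ?thesis
    by (simp add: Knorm2_def g_def[symmetric] inner_diff_left vx_Delta_def ecanon_inner)
qed

lemma vx_alpha_nonneg:
  assumes "sym_pos_def_mat K" "wh \<in> prob_simplex" "v \<in> prob_simplex" "vx_choice K wh v ip im"
  shows "0 \<le> vx_alpha K wh v ip im"
proof -
  have "K *v (wh - v) = - (K *v (v - wh))" by (simp add: matrix_vector_mult_diff_distrib)
  moreover have "0 \<le> - (vx_Delta ip im \<bullet> (K *v (v - wh)))"
    using vx_choice_gap[OF assms(2-4)] Knorm2_nonneg[OF assms(1)] by (meson order_trans)
  ultimately show ?thesis
    unfolding vx_alpha_def using Knorm2_nonneg[OF assms(1)] by (simp add: divide_nonpos_nonneg)
qed

lemma vx_step_prob_simplex:
  assumes "sym_pos_def_mat K" "wh \<in> prob_simplex" "v \<in> prob_simplex" "vx_step K wh v v'"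
    and step_cond: "\<And>ip im. vx_choice K wh v ip im \<Longrightarrow> vx_Delta ip im \<noteq> 0 \<Longrightarrow>
                      vx_alpha K wh v ip im \<le> v $ im"
  shows "v' \<in> prob_simplex"
proof -
  obtain ip im where ch: "vx_choice K wh v ip im"
    and v': "v' = (if vx_Delta ip im = 0 then v
                   else v + vx_alpha K wh v ip im *\<^sub>R vx_Delta ip im)"
    using assms(4) unfolding vx_step_def by blast
  show ?thesis
    using v' assms(3) step_cond[OF ch] vx_alpha_nonneg[OF assms(1-3) ch]
    by (auto intro: prob_simplex_exchange[OF assms(3)])
qed

text \<open>The step \<open>\<alpha>\<close> is the exact minimiser of \<open>\<parallel>v + \<alpha>\<Delta> - wh\<parallel>\<^sub>K\<^sup>2\<close>, which gains \<open>b\<^sup>2/Q\<close> with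
  \<open>b = \<Delta>\<cdot>K(v - wh)\<close>, \<open>Q = \<parallel>\<Delta>\<parallel>\<^sub>K\<^sup>2 \<le> 2\<lambda>\<^sub>m\<^sub>a\<^sub>x\<close>; the gap inequality gives \<open>F \<le> -b\<close>.\<close>
lemma vx_step_descent:
  fixes K :: "real^'n::finite^'n"
  assumes K: "sym_pos_def_mat K" and "wh \<in> prob_simplex" "v \<in> prob_simplex"
    and "vx_step K wh v v'"
  shows "Knorm2 K (v' - wh) \<le> Knorm2 K (v - wh) - (Knorm2 K (v - wh))^2 / (2 * lambda_max K)"
proof -
  have symK: "transpose K = K" using K by (simp add: sym_pos_def_mat_def)
  define F where "F = Knorm2 K (v - wh)"
  define Lm where "Lm = lambda_max K"
  have F0: "0 \<le> F" and L0: "0 < Lm"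
    unfolding F_def Lm_def using Knorm2_nonneg[OF K] lambda_max_pos[OF K] by auto
  obtain ip im where ch: "vx_choice K wh v ip im"
    and v': "v' = (if vx_Delta ip im = 0 then v
                   else v + vx_alpha K wh v ip im *\<^sub>R vx_Delta ip im)"
    using assms(4) unfolding vx_step_def by blast
  define D where "D = vx_Delta ip im"
  define b where "b = D \<bullet> (K *v (v - wh))"
  have Fb: "F \<le> - b" unfolding F_def b_def D_def by (rule vx_choice_gap[OF assms(2,3) ch])
  show ?thesis
  proof (cases "D = 0")
    case True
    then have "F = 0" using F0 Fb by (simp add: b_def)
    then show ?thesis using v' True by (simp add: D_def F_def)
  next
    case False
    define Q where "Q = Knorm2 K D"
    have Q0: "0 < Q" unfolding Q_def using Knorm2_pos[OF K False] .
    have "Q \<le> Lm * (D \<bullet> D)" unfolding Q_def Lm_def by (rule Knorm2_le_lambda_max[OF symK])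
    also have "\<dots> \<le> Lm * 2"
      using L0 vx_Delta_inner_self_le_2 unfolding D_def by (intro mult_left_mono) auto
    finally have Q2: "Q \<le> 2 * Lm" by simp
    define \<alpha> where "\<alpha> = vx_alpha K wh v ip im"
    have b_eq: "b = - (Q * \<alpha>)"
      using Q0 unfolding \<alpha>_def vx_alpha_def b_def Q_def D_def
      by (simp add: matrix_vector_mult_diff_distrib inner_diff_right)
    have "Knorm2 K (v' - wh) = Knorm2 K ((v - wh) + \<alpha> *\<^sub>R D)"
      using v' False by (simp add: D_def \<alpha>_def algebra_simps)
    also have "\<dots> = F + 2 * \<alpha> * b + \<alpha>^2 * Q"
      unfolding Knorm2_def F_def Q_def b_def by (rule quadratic_form_add_scaleR[OF symK])
    also have "\<dots> = F - b^2 / Q"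
      unfolding b_eq using Q0 by (simp add: field_simps power2_eq_square)
    also have "\<dots> \<le> F - F^2 / (2 * Lm)"
    proof -
      have "F^2 \<le> b^2" using power_mono[OF Fb F0, of 2] by simp
      have "F^2 / (2 * Lm) \<le> F^2 / Q" using Q0 Q2 by (intro divide_left_mono) auto
      also have "\<dots> \<le> b^2 / Q" using \<open>F^2 \<le> b^2\<close> Q0 by (intro divide_right_mono) auto
      finally show ?thesis by simp
    qed
    finally show ?thesis unfolding F_def Lm_def .
  qed
qed

section \<open>The rate of the descent recurrence\<close>

text \<open>The map \<open>x \<mapsto> x - x\<^sup>2/(2L)\<close> increases on \<open>[0, L]\<close>, so for \<open>m > 12\<close> it suffices to check the
  endpoint \<open>8L/(m+3)\<close>; for smaller \<open>m\<close> its global maximum \<open>L/2\<close> is already small enough.\<close>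
lemma quadratic_descent_step_bound:
  fixes L x m :: real
  assumes L: "L > 0" and m: "m \<ge> 1" and x0: "0 \<le> x" and xa: "x \<le> 8 * L / (m + 3)"
  shows "x - x^2 / (2 * L) \<le> 8 * L / (m + 4)"
proof -
  define y where "y = x / L"
  have y0: "0 \<le> y" using x0 L unfolding y_def by simp
  have ya: "y \<le> 8 / (m + 3)" using xa L m unfolding y_def by (simp add: divide_le_eq field_simps)
  have "y - y^2 / 2 \<le> 8 / (m + 4)"
  proof (cases "m \<le> 12")
    case True
    have "0 \<le> (y - 1)^2" by simp
    then have "y - y^2 / 2 \<le> 1 / 2" by (simp add: power2_eq_square algebra_simps)
    moreover have "1 / 2 \<le> 8 / (m + 4)" using True m by (simp add: field_simps)
    ultimately show ?thesis by linarith
  next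
    case False
    define a where "a = 8 / (m + 3)"
    have "(a - y) * (1 - (a + y) / 2) \<ge> 0"
      using ya y0 False unfolding a_def by (intro mult_nonneg_nonneg) (auto simp: field_simps)
    then have "y - y^2 / 2 \<le> a - a^2 / 2" by (simp add: power2_eq_square field_simps)
    also have "a - a^2 / 2 = 8 * (m - 1) / (m + 3)^2"
    proof -
      define c where "c = m + 3"
      have "c \<noteq> 0" using m unfolding c_def by simp
      then have "8 / c - (8 / c)^2 / 2 = 8 * (c - 4) / c^2"
        by (simp add: field_simps power2_eq_square)
      then show ?thesis unfolding a_def c_def by simp
    qed
    also have "\<dots> \<le> 8 / (m + 4)"
    proof -
      have "(m - 1) * (m + 4) \<le> (m + 3)^2" using m by (simp add: power2_eq_square algebra_simps)
      then show ?thesis using m by (simp add: field_simps)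
    qed
    finally show ?thesis .
  qed
  then have "L * (y - y^2 / 2) \<le> L * (8 / (m + 4))" using L by (intro mult_left_mono) auto
  moreover have "x - x^2 / (2 * L) = L * (y - y^2 / 2)"
    using L unfolding y_def by (simp add: field_simps power2_eq_square)
  ultimately show ?thesis by (simp add: mult.commute)
qed

lemma quadratic_descent_rate:
  fixes x :: "nat \<Rightarrow> real" and L :: real
  assumes L: "L > 0" and nonneg: "\<And>n. n \<ge> 1 \<Longrightarrow> 0 \<le> x n" and init: "x 1 \<le> 2 * L"
    and descent: "\<And>n. n \<ge> 1 \<Longrightarrow> x (Suc n) \<le> x n - (x n)^2 / (2 * L)"
    and n: "n \<ge> 1"
  shows "x n \<le> 8 * L / (real n + 3)"
  using n
proof (induction n rule: nat_induct_at_least)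
  case base
  then show ?case using init by simp
next
  case (Suc n)
  have "x n - (x n)^2 / (2 * L) \<le> 8 * L / (real n + 4)"
    using Suc L nonneg by (intro quadratic_descent_step_bound) auto
  then show ?case using descent[OF Suc.hyps] by (simp add: add.commute add.left_commute)
qed

theorem lemmaA7:
  fixes K :: "real^'n::finite^'n" and wh :: "real^'n" and w :: "nat \<Rightarrow> real^'n"
  assumes K: "sym_pos_def_mat K"
    and wh: "wh \<in> prob_simplex"
    and step_cond: "\<And>v ip im. v \<in> prob_simplex \<Longrightarrow> vx_choice K wh v ip im \<Longrightarrow>
                      vx_Delta ip im \<noteq> 0 \<Longrightarrow> vx_alpha K wh v ip im \<le> v $ im"
    and init: "w 1 \<in> prob_simplex"
    and iter: "\<And>n. n \<ge> 1 \<Longrightarrow> vx_step K wh (w n) (w (Suc n))"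
  shows "\<forall>n\<ge>1. Knorm2 K (w n - wh) \<le> 8 * lambda_max K / (real n + 3)"
proof (intro allI impI)
  have simplex: "w n \<in> prob_simplex" if "n \<ge> 1" for n
    using that
  proof (induction n rule: nat_induct_at_least)
    case (Suc n)
    then show ?case using vx_step_prob_simplex[OF K wh _ iter] step_cond by blast
  qed (rule init)
  have "Knorm2 K (w 1 - wh) \<le> lambda_max K * ((w 1 - wh) \<bullet> (w 1 - wh))"
    using K by (intro Knorm2_le_lambda_max) (simp add: sym_pos_def_mat_def)
  also have "\<dots> \<le> lambda_max K * 2"
    using prob_simplex_dist_le_2[OF init wh] lambda_max_pos[OF K] by (intro mult_left_mono) auto
  finally have init_bound: "Knorm2 K (w 1 - wh) \<le> lambda_max K * 2" .
  fix n :: nat assume "n \<ge> 1"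
  then show "Knorm2 K (w n - wh) \<le> 8 * lambda_max K / (real n + 3)"
    using lambda_max_pos[OF K] Knorm2_nonneg[OF K] init_bound
      vx_step_descent[OF K wh simplex iter]
    by (intro quadratic_descent_rate) (auto simp: mult.commute)
qed

end
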